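(* Let $T\ge 2$ be an integer and $n=T^2$. Consider the family of Adaptive Sampling for Discovery (ASD) problems with unlabeled set $S^n=[n]=\{1,\dots,n\}$, parameter $\theta\in[0,1]^n$, and label distribution $\mathcal{D}_{\theta\mid x}=\mathcal{N}(\theta_x,1)$ for $x\in[n]$ (so $f_\theta(x)=\theta_x$). For any algorithm $\mathcal{A}$ there exists a prior distribution on $\theta\in[0,1]^n$ (i.e. over this family of ASD problems) such that $\mathcal{BR}(T,\mathcal{A})\ge cT$, where $c>0$ is a universal constant.
   Context: Adaptive Sampling for Discovery (ASD): an unknown parameter $\theta$ is drawn from a prior; given input $x$ the label is drawn from $\mathcal{D}_{\theta\mid x}$, and $f_\theta(x)=\mathbb{E}_{Y\sim\mathcal{D}_{\theta\mid x}}[Y]$. Starting from a finite unlabeled set $S^n$, at each step $t=1,\dots,T$ an algorithm chooses (possibly at random, based on the history $\mathcal{F}_t=\{(X_i,Y_i)\}_{i<t}$) a point $X_t\in S^n_t:=S^n\setminus\{X_1,\dots,X_{t-1}\}$ and observes $Y_t\sim\mathcal{D}_{\theta\mid X_t}$; each point can be labeled at most once. The regret is $R_T=\max_{x_1,\dots,x_T\in S^n \text{ distinct}}\sum_{t=1}^T f_\theta(x_t)-\sum_{t=1}^T f_\theta(X_t)$, and the Bayesian regret is $\mathcal{BR}(T,\mathcal{A})=\mathbb{E}[R_T]$, the expectation being over the prior on $\theta$, the labels, and the algorithm's randomness. *)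

theory Defs
  imports "HOL-Probability.Probability"
begin

text \<open>ASD instance: unlabeled set {1..n}, parameter theta :: nat => real (extensional on {1..n}),
  labels Y = theta x + noise with standard Gaussian noise.\<close>

definition std_normal :: "real measure" where
  "std_normal = density lborel std_normal_density"

definition param_space :: "nat \<Rightarrow> (nat \<Rightarrow> real) measure" where
  "param_space n = PiM {1..n} (\<lambda>_. borel)"

text \<open>Label noise: one independent N(0,1) variable per point (each point is labeled at most once).\<close>
definition noise_space :: "nat \<Rightarrow> (nat \<Rightarrow> real) measure" where
  "noise_space n = PiM {1..n} (\<lambda>_. std_normal)"

text \<open>An algorithm with internal random seed w :: real: at step t (0-based) it chooses
  pol t w h, where h i = (X_(i+1), Y_(i+1)) for i < t is the history so far.\<close>
type_synonym asd_alg = "nat \<Rightarrow> real \<Rightarrow> (nat \<Rightarrow> nat \<times> real) \<Rightarrow> nat"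

definition hist_space :: "nat \<Rightarrow> (nat \<Rightarrow> nat \<times> real) measure" where
  "hist_space t = PiM {..<t} (\<lambda>_. count_space UNIV \<Otimes>\<^sub>M borel)"

definition valid_alg :: "nat \<Rightarrow> nat \<Rightarrow> real measure \<Rightarrow> asd_alg \<Rightarrow> bool" where
  "valid_alg n T P pol \<longleftrightarrow>
     (\<forall>t<T. (\<lambda>(w, h). pol t w h) \<in> measurable (P \<Otimes>\<^sub>M hist_space t) (count_space UNIV)) \<and>
     (\<forall>t<T. \<forall>w h. (\<forall>i<t. fst (h i) \<in> {1..n}) \<and> inj_on (fst \<circ> h) {..<t} \<longrightarrow>
         pol t w h \<in> {1..n} \<and> pol t w h \<notin> (fst \<circ> h) ` {..<t})"

primrec asd_hist :: "asd_alg \<Rightarrow> real \<Rightarrow> (nat \<Rightarrow> real) \<Rightarrow> (nat \<Rightarrow> real) \<Rightarrow> nat \<Rightarrow> (nat \<Rightarrow> nat \<times> real)" where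
  "asd_hist pol w \<theta> z 0 = (\<lambda>_. undefined)"
| "asd_hist pol w \<theta> z (Suc t) =
     (let h = asd_hist pol w \<theta> z t; x = pol t w h in h(t := (x, \<theta> x + z x)))"

definition opt_value :: "nat \<Rightarrow> nat \<Rightarrow> (nat \<Rightarrow> real) \<Rightarrow> real" where
  "opt_value n T \<theta> = Max ((\<lambda>S. \<Sum>x\<in>S. \<theta> x) ` {S. S \<subseteq> {1..n} \<and> card S = T})"

definition regret :: "nat \<Rightarrow> nat \<Rightarrow> asd_alg \<Rightarrow> real \<Rightarrow> (nat \<Rightarrow> real) \<Rightarrow> (nat \<Rightarrow> real) \<Rightarrow> real" where
  "regret n T pol w \<theta> z =
     opt_value n T \<theta> - (\<Sum>t<T. \<theta> (fst (asd_hist pol w \<theta> z T t)))"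

definition bayes_regret :: "nat \<Rightarrow> nat \<Rightarrow> (nat \<Rightarrow> real) measure \<Rightarrow> real measure \<Rightarrow> asd_alg \<Rightarrow> real" where
  "bayes_regret n T Q P pol =
     (\<integral>\<omega>. (case \<omega> of (\<theta>, z, w) \<Rightarrow> regret n T pol w \<theta> z) \<partial>(Q \<Otimes>\<^sub>M (noise_space n \<Otimes>\<^sub>M P)))"

end

theory Submission
  imports Defs
begin

text \<open>Draw \<theta> uniformly from the cube \<open>{0,1}\<^sup>n\<close>. Since every point is labeled at most once,
  the history before step t does not involve \<theta> at the point \<open>X\<^sub>t\<close> about to be queried,
  so flipping \<theta> at \<open>X\<^sub>t\<close> is an involution of the cube that leaves \<open>X\<^sub>t\<close> unchanged:
  for every seed and every noise realisation, the expected reward of each step is 1/2.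
  On the other hand, pairing up the points \<open>1, \<dots>, 2T\<close>, the optimum is at least the sum
  of the T pairwise maxima, each of expectation 3/4. Hence the Bayesian regret is at
  least \<open>T/4\<close>.\<close>

definition cube :: "nat \<Rightarrow> (nat \<Rightarrow> real) set" where
  "cube n = PiE {1..n} (\<lambda>_. {0, 1})"

definition flip_at :: "(nat \<Rightarrow> real) \<Rightarrow> nat \<Rightarrow> nat \<Rightarrow> real" where
  "flip_at \<theta> a = \<theta>(a := 1 - \<theta> a)"

lemma flip_at_in_cube: "a \<in> {1..n} \<Longrightarrow> \<theta> \<in> cube n \<Longrightarrow> flip_at \<theta> a \<in> cube n"
  by (auto simp: cube_def flip_at_def PiE_iff extensional_def)

lemma flip_at_flip_at [simp]: "flip_at (flip_at \<theta> a) a = \<theta>"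
  by (auto simp: flip_at_def)

lemma flip_at_same [simp]: "flip_at \<theta> a a = 1 - \<theta> a"
  by (simp add: flip_at_def)

lemma flip_at_other [simp]: "b \<noteq> a \<Longrightarrow> flip_at \<theta> a b = \<theta> b"
  by (simp add: flip_at_def)

lemma cube_values: "\<theta> \<in> cube n \<Longrightarrow> x \<in> {1..n} \<Longrightarrow> \<theta> x = 0 \<or> \<theta> x = 1"
  by (auto simp: cube_def PiE_iff)

lemma finite_cube: "finite (cube n)"
  by (auto simp: cube_def intro!: finite_PiE)

lemma cube_nonempty: "cube n \<noteq> {}"
  by (auto simp: cube_def PiE_eq_empty_iff)

lemma restrict_cube: "\<theta> \<in> cube n \<Longrightarrow> restrict \<theta> {1..n} = \<theta>"
  unfolding cube_def by (rule PiE_restrict)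

lemma sum_cube_flip_at_query:
  assumes "\<And>\<theta>. \<theta> \<in> cube n \<Longrightarrow> X \<theta> \<in> {1..n}"
    and "\<And>\<theta>. \<theta> \<in> cube n \<Longrightarrow> X (flip_at \<theta> (X \<theta>)) = X \<theta>"
  shows "(\<Sum>\<theta>\<in>cube n. g (flip_at \<theta> (X \<theta>))) = (\<Sum>\<theta>\<in>cube n. g \<theta>)"
  by (rule sum.reindex_bij_witness[of _ "\<lambda>\<theta>. flip_at \<theta> (X \<theta>)" "\<lambda>\<theta>. flip_at \<theta> (X \<theta>)"])
    (simp_all add: assms flip_at_in_cube[OF assms(1)])

lemma sum_cube_query_half:
  assumes "\<And>\<theta>. \<theta> \<in> cube n \<Longrightarrow> X \<theta> \<in> {1..n}"
    and "\<And>\<theta>. \<theta> \<in> cube n \<Longrightarrow> X (flip_at \<theta> (X \<theta>)) = X \<theta>"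
  shows "(\<Sum>\<theta>\<in>cube n. \<theta> (X \<theta>)) = real (card (cube n)) / 2"
proof -
  have "(\<Sum>\<theta>\<in>cube n. \<theta> (X \<theta>)) = (\<Sum>\<theta>\<in>cube n. flip_at \<theta> (X \<theta>) (X (flip_at \<theta> (X \<theta>))))"
    using sum_cube_flip_at_query[of n X "\<lambda>\<theta>. \<theta> (X \<theta>)"] assms by simp
  also have "\<dots> = (\<Sum>\<theta>\<in>cube n. 1 - \<theta> (X \<theta>))"
    using assms(2) by simp
  also have "\<dots> = real (card (cube n)) - (\<Sum>\<theta>\<in>cube n. \<theta> (X \<theta>))"
    by (simp add: sum_subtractf)
  finally show ?thesis by simp
qed

lemma sum_cube_max_pair:
  assumes "a \<in> {1..n}" "b \<in> {1..n}" "a \<noteq> b"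
  shows "(\<Sum>\<theta>\<in>cube n. max (\<theta> a) (\<theta> b)) = 3 * real (card (cube n)) / 4"
proof -
  have flip_a: "(\<Sum>\<theta>\<in>cube n. max (\<theta> a) (\<theta> b)) = (\<Sum>\<theta>\<in>cube n. max (1 - \<theta> a) (\<theta> b))"
    using sum_cube_flip_at_query[of n "\<lambda>_. a" "\<lambda>\<theta>. max (\<theta> a) (\<theta> b)"] assms by simp
  have "(\<Sum>\<theta>\<in>cube n. max (\<theta> a) (\<theta> b) + max (1 - \<theta> a) (\<theta> b)) = (\<Sum>\<theta>\<in>cube n. 1 + \<theta> b)"
  proof (rule sum.cong)
    fix \<theta> assume "\<theta> \<in> cube n"
    then show "max (\<theta> a) (\<theta> b) + max (1 - \<theta> a) (\<theta> b) = 1 + \<theta> b"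
      using cube_values[of \<theta> n a] cube_values[of \<theta> n b] assms by auto
  qed simp
  also have "\<dots> = real (card (cube n)) + real (card (cube n)) / 2"
    using sum_cube_query_half[of n "\<lambda>_. b"] assms(2) by (simp add: sum.distrib)
  finally show ?thesis
    using flip_a by (simp add: sum.distrib)
qed

text \<open>The point queried at the 0-based step t, called \<open>X\<^sub>t\<^sub>+\<^sub>1\<close> in the paper.\<close>

abbreviation asd_query :: "asd_alg \<Rightarrow> real \<Rightarrow> (nat \<Rightarrow> real) \<Rightarrow> (nat \<Rightarrow> real) \<Rightarrow> nat \<Rightarrow> nat" where
  "asd_query pol w \<theta> z t \<equiv> pol t w (asd_hist pol w \<theta> z t)"

lemma asd_hist_prefix: "i < s \<Longrightarrow> s \<le> t \<Longrightarrow> asd_hist pol w \<theta> z t i = asd_hist pol w \<theta> z s i"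
  by (induction t) (auto simp: Let_def le_Suc_eq)

lemma fst_asd_hist: "t < T \<Longrightarrow> fst (asd_hist pol w \<theta> z T t) = asd_query pol w \<theta> z t"
  using asd_hist_prefix[of t "Suc t" T pol w \<theta> z] by (simp add: Let_def)

lemma image_fst_asd_hist: "(fst \<circ> asd_hist pol w \<theta> z t) ` {..<t} = asd_query pol w \<theta> z ` {..<t}"
  by (rule image_cong) (simp_all add: fst_asd_hist)

lemma asd_hist_update_unqueried:
  "a \<notin> asd_query pol w \<theta> z ` {..<t} \<Longrightarrow> asd_hist pol w (\<theta>(a := v)) z t = asd_hist pol w \<theta> z t"
proof (induction t)
  case (Suc t)
  have "a \<notin> asd_query pol w \<theta> z ` {..<t}"
    using Suc.prems by (auto simp: lessThan_Suc)
  then have hist_eq: "asd_hist pol w (\<theta>(a := v)) z t = asd_hist pol w \<theta> z t"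
    by (rule Suc.IH)
  have "asd_query pol w \<theta> z t \<noteq> a"
    using Suc.prems by auto
  then show ?case
    unfolding asd_hist.simps Let_def hist_eq by simp
qed simp

lemma valid_alg_choice:
  assumes "valid_alg n T P pol" "t < T"
    and "\<forall>i<t. fst (h i) \<in> {1..n}" "inj_on (fst \<circ> h) {..<t}"
  shows "pol t w h \<in> {1..n} \<and> pol t w h \<notin> (fst \<circ> h) ` {..<t}"
  using assms unfolding valid_alg_def by simp

lemma asd_query_valid:
  assumes valid: "valid_alg n T P pol" and "t < T"
  shows "asd_query pol w \<theta> z t \<in> {1..n} \<and> asd_query pol w \<theta> z t \<notin> asd_query pol w \<theta> z ` {..<t}"
  using \<open>t < T\<close>
proof (induction t rule: less_induct)
  case (less t)
  let ?h = "asd_hist pol w \<theta> z t"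
  have "\<forall>i<t. fst (?h i) \<in> {1..n}"
    using less by (simp add: fst_asd_hist)
  moreover have "inj_on (fst \<circ> ?h) {..<t}"
  proof (rule linorder_inj_onI')
    fix i j assume "i \<in> {..<t}" "j \<in> {..<t}" "i < j"
    then have "asd_query pol w \<theta> z j \<notin> asd_query pol w \<theta> z ` {..<j}"
      using less by auto
    moreover have "asd_query pol w \<theta> z i \<in> asd_query pol w \<theta> z ` {..<j}"
      using \<open>i < j\<close> by simp
    ultimately show "(fst \<circ> ?h) i \<noteq> (fst \<circ> ?h) j"
      using \<open>i \<in> {..<t}\<close> \<open>j \<in> {..<t}\<close> by (auto simp: fst_asd_hist)
  qed
  ultimately have "pol t w ?h \<in> {1..n} \<and> pol t w ?h \<notin> (fst \<circ> ?h) ` {..<t}"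
    by (rule valid_alg_choice[OF valid less.prems])
  then show ?case
    unfolding image_fst_asd_hist .
qed

lemma asd_query_flip_at_query:
  assumes "valid_alg n T P pol" "t < T"
  shows "asd_query pol w (flip_at \<theta> (asd_query pol w \<theta> z t)) z t = asd_query pol w \<theta> z t"
proof -
  have "asd_hist pol w (flip_at \<theta> (asd_query pol w \<theta> z t)) z t = asd_hist pol w \<theta> z t"
    unfolding flip_at_def
    by (rule asd_hist_update_unqueried) (use asd_query_valid[OF assms] in blast)
  then show ?thesis by simp
qed

lemma sum_cube_asd_query:
  assumes "valid_alg n T P pol" "t < T"
  shows "(\<Sum>\<theta>\<in>cube n. \<theta> (asd_query pol w \<theta> z t)) = real (card (cube n)) / 2"
  by (rule sum_cube_query_half) (use asd_query_valid[OF assms] in blast, rule asd_query_flip_at_query[OF assms])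

lemma finite_card_subsets: "finite {S. S \<subseteq> A \<and> card S = k}" if "finite A"
  by (rule finite_subset[of _ "Pow A"]) (use that in auto)

lemma sum_le_opt_value:
  assumes "S \<subseteq> {1..n}" "card S = T"
  shows "(\<Sum>x\<in>S. \<theta> x) \<le> opt_value n T \<theta>"
  unfolding opt_value_def
  by (rule Max_ge) (use assms finite_card_subsets in auto)

lemma sum_max_pairs_le_opt_value:
  assumes "2 * T \<le> n"
  shows "(\<Sum>i<T. max (\<theta> (2*i+1)) (\<theta> (2*i+2))) \<le> opt_value n T \<theta>"
proof -
  define pick where "pick i = (if \<theta> (2*i+2) \<le> \<theta> (2*i+1) then 2*i+1 else 2*i+2)" for i
  have inj: "inj_on pick {..<T}"
    by (auto simp: inj_on_def pick_def split: if_splits)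
  have "(\<Sum>i<T. max (\<theta> (2*i+1)) (\<theta> (2*i+2))) = (\<Sum>i<T. \<theta> (pick i))"
    by (rule sum.cong) (auto simp: pick_def max_def)
  also have "\<dots> = (\<Sum>x\<in>pick ` {..<T}. \<theta> x)"
    by (simp add: sum.reindex[OF inj])
  also have "\<dots> \<le> opt_value n T \<theta>"
    by (rule sum_le_opt_value) (use assms card_image[OF inj] in \<open>auto simp: pick_def\<close>)
  finally show ?thesis .
qed

lemma opt_value_bounds:
  assumes "T \<le> n" "\<forall>x\<in>{1..n}. \<theta> x \<in> {0..1}"
  shows "0 \<le> opt_value n T \<theta>" "opt_value n T \<theta> \<le> T"
proof -
  have "0 \<le> (\<Sum>x\<in>{1..T}. \<theta> x)"
    using assms by (intro sum_nonneg) auto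
  also have "\<dots> \<le> opt_value n T \<theta>"
    using assms by (intro sum_le_opt_value) auto
  finally show "0 \<le> opt_value n T \<theta>" .
  have "(\<Sum>x\<in>S. \<theta> x) \<le> real T" if "S \<subseteq> {1..n}" "card S = T" for S
    using sum_mono[of S \<theta> "\<lambda>_. 1"] that assms(2) by auto
  moreover have "{S. S \<subseteq> {1..n} \<and> card S = T} \<noteq> {}"
    using assms(1) by (auto intro!: exI[of _ "{1..T}"])
  ultimately show "opt_value n T \<theta> \<le> T"
    unfolding opt_value_def by (subst Max_le_iff) (auto intro: finite_card_subsets)
qed

lemma abs_regret_le:
  assumes "valid_alg n T P pol" "T \<le> n" "\<forall>x\<in>{1..n}. \<theta> x \<in> {0..1}"
  shows "\<bar>regret n T pol w \<theta> z\<bar> \<le> T"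
proof -
  have reward: "\<theta> (fst (asd_hist pol w \<theta> z T t)) \<in> {0..1}" if "t < T" for t
    using assms(3) asd_query_valid[OF assms(1) that] by (simp add: fst_asd_hist[OF that])
  have "0 \<le> (\<Sum>t<T. \<theta> (fst (asd_hist pol w \<theta> z T t)))"
    by (rule sum_nonneg) (use reward in auto)
  moreover have "(\<Sum>t<T. \<theta> (fst (asd_hist pol w \<theta> z T t))) \<le> (\<Sum>t<T. 1)"
    by (rule sum_mono) (use reward in auto)
  ultimately show ?thesis
    using opt_value_bounds[OF assms(2,3)] unfolding regret_def by auto
qed

lemma sum_cube_regret_ge:
  assumes valid: "valid_alg n T P pol" and "2 * T \<le> n"
  shows "real T * card (cube n) / 4 \<le> (\<Sum>\<theta>\<in>cube n. regret n T pol w \<theta> z)"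
proof -
  let ?c = "real (card (cube n))"
  have "real T * (3 * ?c / 4) = (\<Sum>i<T. \<Sum>\<theta>\<in>cube n. max (\<theta> (2*i+1)) (\<theta> (2*i+2)))"
    using assms(2) by (simp add: sum_cube_max_pair)
  also have "\<dots> = (\<Sum>\<theta>\<in>cube n. \<Sum>i<T. max (\<theta> (2*i+1)) (\<theta> (2*i+2)))"
    by (rule sum.swap)
  also have "\<dots> \<le> (\<Sum>\<theta>\<in>cube n. opt_value n T \<theta>)"
    by (intro sum_mono sum_max_pairs_le_opt_value assms(2))
  finally have opt: "real T * (3 * ?c / 4) \<le> (\<Sum>\<theta>\<in>cube n. opt_value n T \<theta>)" .
  have "(\<Sum>\<theta>\<in>cube n. \<Sum>t<T. \<theta> (fst (asd_hist pol w \<theta> z T t))) = (\<Sum>t<T. \<Sum>\<theta>\<in>cube n. \<theta> (asd_query pol w \<theta> z t))"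
    by (subst sum.swap) (simp add: fst_asd_hist)
  also have "\<dots> = real T * (?c / 2)"
    by (simp add: sum_cube_asd_query[OF valid])
  finally show ?thesis
    using opt unfolding regret_def sum_subtractf by simp
qed

lemma measurable_component_PiM_borel [measurable]:
  "(\<lambda>f. f x) \<in> borel_measurable (PiM I (\<lambda>_. borel :: 'a::topological_space measure))"
proof (cases "x \<in> I")
  case True
  then show ?thesis by (rule measurable_component_singleton)
next
  case False
  then have "f x = undefined" if "f \<in> space (PiM I (\<lambda>_. borel :: 'a measure))" for f
    using that by (auto simp: space_PiM PiE_def extensional_def)
  then show ?thesis
    by (subst measurable_cong[where g = "\<lambda>_. undefined"]) simp_all
qed

lemma sets_noise_space: "sets (noise_space n) = sets (param_space n)"
  unfolding noise_space_def param_space_def std_normal_def by (intro sets_PiM_cong) simp_all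

lemma prob_space_noise_space: "prob_space (noise_space n)"
  unfolding noise_space_def std_normal_def by (intro prob_space_PiM prob_space_normal_density) simp

lemma measurable_param_component [measurable]: "(\<lambda>\<theta>. \<theta> x) \<in> borel_measurable (param_space n)"
  unfolding param_space_def by measurable

lemma measurable_noise_component [measurable]: "(\<lambda>z. z x) \<in> borel_measurable (noise_space n)"
  using measurable_param_component by (simp add: measurable_cong_sets[OF sets_noise_space])

lemma measurable_hist_update:
  assumes h: "h \<in> measurable N (hist_space t)"
    and g: "g \<in> measurable N (count_space UNIV \<Otimes>\<^sub>M borel)"
  shows "(\<lambda>\<omega>. (h \<omega>)(t := g \<omega>)) \<in> measurable N (hist_space (Suc t))"
  unfolding hist_space_def
proof (rule measurable_PiM_single')
  fix i assume "i \<in> {..<Suc t}"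
  then consider "i = t" | "i \<in> {..<t}" by fastforce
  then show "(\<lambda>\<omega>. ((h \<omega>)(t := g \<omega>)) i) \<in> measurable N (count_space UNIV \<Otimes>\<^sub>M borel)"
  proof cases
    case 2
    then show ?thesis
      using measurable_compose[OF h[unfolded hist_space_def] measurable_component_singleton] by auto
  qed (simp add: g)
next
  show "(\<lambda>\<omega>. (h \<omega>)(t := g \<omega>)) \<in> space N \<rightarrow> (\<Pi>\<^sub>E i\<in>{..<Suc t}. space (count_space UNIV \<Otimes>\<^sub>M borel))"
    using measurable_space[OF h]
    by (auto simp: hist_space_def space_PiM PiE_def extensional_def space_pair_measure)
qed

definition outcome_space :: "nat \<Rightarrow> real measure \<Rightarrow> ((nat \<Rightarrow> real) \<times> (nat \<Rightarrow> real) \<times> real) measure" where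
  "outcome_space n P = param_space n \<Otimes>\<^sub>M (noise_space n \<Otimes>\<^sub>M P)"

lemma measurable_outcome_param [measurable]: "(\<lambda>\<omega>. fst \<omega> x) \<in> borel_measurable (outcome_space n P)"
  unfolding outcome_space_def by measurable

lemma measurable_outcome_noise [measurable]: "(\<lambda>\<omega>. fst (snd \<omega>) x) \<in> borel_measurable (outcome_space n P)"
  unfolding outcome_space_def by measurable

lemma measurable_outcome_seed [measurable]: "(\<lambda>\<omega>. snd (snd \<omega>)) \<in> measurable (outcome_space n P) P"
  unfolding outcome_space_def by measurable

lemma measurable_asd_hist:
  assumes valid: "valid_alg n T P pol"
  shows "t \<le> T \<Longrightarrow>
    (\<lambda>\<omega>. asd_hist pol (snd (snd \<omega>)) (fst \<omega>) (fst (snd \<omega>)) t) \<in> measurable (outcome_space n P) (hist_space t)"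
proof (induction t)
  case 0
  have "(\<lambda>_. undefined) \<in> space (hist_space 0)"
    by (simp add: hist_space_def space_PiM)
  then show ?case by simp
next
  case (Suc t)
  let ?h = "\<lambda>\<omega>. asd_hist pol (snd (snd \<omega>)) (fst \<omega>) (fst (snd \<omega>)) t"
  let ?x = "\<lambda>\<omega>. pol t (snd (snd \<omega>)) (?h \<omega>)"
  have h: "?h \<in> measurable (outcome_space n P) (hist_space t)"
    using Suc by simp
  have "(\<lambda>(w, h). pol t w h) \<in> measurable (P \<Otimes>\<^sub>M hist_space t) (count_space UNIV)"
    using valid Suc.prems unfolding valid_alg_def by simp
  from measurable_compose[OF measurable_Pair[OF measurable_outcome_seed h] this]
  have x: "?x \<in> measurable (outcome_space n P) (count_space UNIV)"
    by simp
  have y: "(\<lambda>\<omega>. fst \<omega> (?x \<omega>) + fst (snd \<omega>) (?x \<omega>)) \<in> borel_measurable (outcome_space n P)"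
    by (rule measurable_compose_countable'[where I = UNIV, OF _ x]) auto
  show ?case
    unfolding asd_hist.simps Let_def by (rule measurable_hist_update[OF h measurable_Pair[OF x y]])
qed

lemma measurable_regret:
  assumes valid: "valid_alg n T P pol"
  shows "(\<lambda>\<omega>. regret n T pol (snd (snd \<omega>)) (fst \<omega>) (fst (snd \<omega>))) \<in> borel_measurable (outcome_space n P)"
proof -
  have opt: "(\<lambda>\<omega>. opt_value n T (fst \<omega>)) \<in> borel_measurable (outcome_space n P)"
    unfolding opt_value_def
    by (rule borel_measurable_Max[OF finite_card_subsets]) (auto intro!: borel_measurable_sum)
  have query: "(\<lambda>\<omega>. fst (asd_hist pol (snd (snd \<omega>)) (fst \<omega>) (fst (snd \<omega>)) T t))
      \<in> measurable (outcome_space n P) (count_space UNIV)" if "t < T" for t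
    using measurable_compose[OF measurable_asd_hist[OF valid order.refl, unfolded hist_space_def]
        measurable_component_singleton] that
    by (auto intro: measurable_compose[OF _ measurable_fst])
  have "(\<lambda>\<omega>. \<Sum>t<T. fst \<omega> (fst (asd_hist pol (snd (snd \<omega>)) (fst \<omega>) (fst (snd \<omega>)) T t)))
      \<in> borel_measurable (outcome_space n P)"
    by (rule borel_measurable_sum, rule measurable_compose_countable'[where I = UNIV, OF _ query]) auto
  with opt show ?thesis
    unfolding regret_def by measurable
qed

lemma integral_pair_ge_const:
  fixes f :: "'a \<Rightarrow> 'b \<Rightarrow> real"
  assumes "prob_space M" "prob_space N"
    and f: "case_prod f \<in> borel_measurable (M \<Otimes>\<^sub>M N)"
    and bounded: "AE x in M. \<forall>y\<in>space N. \<bar>f x y\<bar> \<le> B"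
    and sections: "\<And>y. y \<in> space N \<Longrightarrow> c \<le> (\<integral>x. f x y \<partial>M)"
  shows "c \<le> (\<integral>\<omega>. case_prod f \<omega> \<partial>(M \<Otimes>\<^sub>M N))"
proof -
  interpret pair_prob_space M N
    using assms(1,2) by (simp add: pair_prob_space_def pair_sigma_finite_def prob_space_imp_sigma_finite)
  have "AE \<omega> in M \<Otimes>\<^sub>M N. norm (case_prod f \<omega>) \<le> B"
  proof (rule AE_pair_measure)
    show "{\<omega> \<in> space (M \<Otimes>\<^sub>M N). norm (case_prod f \<omega>) \<le> B} \<in> sets (M \<Otimes>\<^sub>M N)"
      using f by measurable
    show "AE x in M. AE y in N. norm (case_prod f (x, y)) \<le> B"
      using bounded by eventually_elim (auto intro: AE_I2)
  qed
  then have int: "integrable (M \<Otimes>\<^sub>M N) (case_prod f)"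
    by (rule P.integrable_const_bound[OF _ f])
  have "c \<le> (\<integral>y. (\<integral>x. f x y \<partial>M) \<partial>N)"
    by (rule M2.integral_ge_const[OF integrable_snd[OF int]]) (simp add: sections)
  also have "\<dots> = (\<integral>\<omega>. case_prod f \<omega> \<partial>(M \<Otimes>\<^sub>M N))"
    by (rule integral_snd[OF int])
  finally show ?thesis .
qed

text \<open>Restricting to \<open>{1..n}\<close> only makes the map land in the extensional space
  \<^const>\<open>param_space\<close>; it is the identity on the cube.\<close>

definition uniform_cube_prior :: "nat \<Rightarrow> (nat \<Rightarrow> real) measure" where
  "uniform_cube_prior n =
     distr (measure_pmf (pmf_of_set (cube n))) (param_space n) (\<lambda>\<theta>. restrict \<theta> {1..n})"

lemma measurable_restrict_param_space:
  "(\<lambda>\<theta>. restrict \<theta> {1..n}) \<in> measurable (measure_pmf p) (param_space n)"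
  by (simp add: param_space_def space_PiM)

lemma prob_space_uniform_cube_prior: "prob_space (uniform_cube_prior n)"
  unfolding uniform_cube_prior_def
  by (rule prob_space.prob_space_distr[OF prob_space_measure_pmf measurable_restrict_param_space])

lemma sets_uniform_cube_prior: "sets (uniform_cube_prior n) = sets (param_space n)"
  by (simp add: uniform_cube_prior_def)

lemma set_pmf_uniform_cube: "set_pmf (pmf_of_set (cube n)) = cube n"
  by (rule set_pmf_of_set[OF cube_nonempty finite_cube])

lemma AE_uniform_cube_prior_unit_interval:
  "AE \<theta> in uniform_cube_prior n. \<forall>x\<in>{1..n}. \<theta> x \<in> {0..1}"
proof -
  have unit: "{\<theta> \<in> space (param_space n). \<forall>x\<in>{1..n}. \<theta> x \<in> {0..1}} \<in> sets (param_space n)"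
    by measurable
  show ?thesis
    unfolding uniform_cube_prior_def AE_distr_iff[OF measurable_restrict_param_space unit]
      AE_measure_pmf_iff set_pmf_uniform_cube
    using cube_values by (fastforce simp: restrict_cube)
qed

lemma integral_uniform_cube_prior:
  assumes "f \<in> borel_measurable (param_space n)"
  shows "(\<integral>\<theta>. f \<theta> \<partial>uniform_cube_prior n) = (\<Sum>\<theta>\<in>cube n. f \<theta>) / card (cube n)"
proof -
  have "(\<integral>\<theta>. f \<theta> \<partial>uniform_cube_prior n) = (\<Sum>\<theta>\<in>cube n. f (restrict \<theta> {1..n})) / card (cube n)"
    unfolding uniform_cube_prior_def integral_distr[OF measurable_restrict_param_space assms]
    by (rule integral_pmf_of_set[OF cube_nonempty finite_cube])
  also have "\<dots> = (\<Sum>\<theta>\<in>cube n. f \<theta>) / card (cube n)"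
    using restrict_cube by (intro arg_cong[where f = "\<lambda>s. s / _"] sum.cong) auto
  finally show ?thesis .
qed

lemma bayes_regret_uniform_cube_prior_ge:
  assumes "2 * T \<le> n" "prob_space P" and valid: "valid_alg n T P pol"
  shows "real T / 4 \<le> bayes_regret n T (uniform_cube_prior n) P pol"
proof -
  let ?Q = "uniform_cube_prior n" and ?M = "noise_space n \<Otimes>\<^sub>M P"
  define F where "F \<theta> = (\<lambda>(z, w). regret n T pol w \<theta> z)" for \<theta>
  have F_param: "case_prod F \<in> borel_measurable (param_space n \<Otimes>\<^sub>M ?M)"
    using measurable_regret[OF valid] unfolding outcome_space_def
    by (rule measurable_cong[THEN iffD1, rotated]) (auto simp: F_def split: prod.splits)
  then have F: "case_prod F \<in> borel_measurable (?Q \<Otimes>\<^sub>M ?M)"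
    by (simp add: measurable_cong_sets[OF sets_pair_measure_cong[OF sets_uniform_cube_prior refl]])
  have "real T / 4 \<le> (\<integral>\<omega>. case_prod F \<omega> \<partial>(?Q \<Otimes>\<^sub>M ?M))"
  proof (rule integral_pair_ge_const[OF prob_space_uniform_cube_prior _ F])
    show "prob_space ?M"
      by (rule prob_space_pair[OF prob_space_noise_space assms(2)])
    show "AE \<theta> in ?Q. \<forall>y\<in>space ?M. \<bar>F \<theta> y\<bar> \<le> real T"
      using AE_uniform_cube_prior_unit_interval
    proof eventually_elim
      case (elim \<theta>)
      have "T \<le> n" using assms(1) by simp
      then show ?case
        using abs_regret_le[OF valid _ elim] by (auto simp: F_def)
    qed
    fix y assume "y \<in> space ?M"
    have "(\<lambda>\<theta>. F \<theta> y) \<in> borel_measurable (param_space n)"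
      using measurable_compose[OF measurable_Pair2'[OF \<open>y \<in> space ?M\<close>] F_param] by simp
    then show "real T / 4 \<le> (\<integral>\<theta>. F \<theta> y \<partial>?Q)"
      using sum_cube_regret_ge[OF valid assms(1)] cube_nonempty finite_cube
      by (cases y) (simp add: integral_uniform_cube_prior F_def field_simps card_gt_0_iff)
  qed
  then show ?thesis
    unfolding bayes_regret_def F_def by (simp add: case_prod_beta')
qed

theorem proposition1:
  shows "\<exists>c>0. \<forall>T::nat. \<forall>(P :: real measure) (pol :: asd_alg).
           T \<ge> 2 \<longrightarrow> prob_space P \<longrightarrow> valid_alg (T^2) T P pol \<longrightarrow>
           (\<exists>Q. prob_space Q \<and> sets Q = sets (param_space (T^2)) \<and>
                (AE \<theta> in Q. \<forall>x\<in>{1..T^2}. \<theta> x \<in> {0..1}) \<and>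
                bayes_regret (T^2) T Q P pol \<ge> c * real T)"
proof (intro exI[of _ "1/4 :: real"] conjI allI impI)
  fix T :: nat and P :: "real measure" and pol :: asd_alg
  assume "T \<ge> 2" "prob_space P" "valid_alg (T^2) T P pol"
  moreover from \<open>T \<ge> 2\<close> have "2 * T \<le> T^2"
    by (simp add: power2_eq_square)
  ultimately have "1/4 * real T \<le> bayes_regret (T^2) T (uniform_cube_prior (T^2)) P pol"
    using bayes_regret_uniform_cube_prior_ge by simp
  then show "\<exists>Q. prob_space Q \<and> sets Q = sets (param_space (T^2)) \<and>
                (AE \<theta> in Q. \<forall>x\<in>{1..T^2}. \<theta> x \<in> {0..1}) \<and>
                bayes_regret (T^2) T Q P pol \<ge> 1/4 * real T"
    using prob_space_uniform_cube_prior sets_uniform_cube_prior AE_uniform_cube_prior_unit_interval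
    by blast
qed simp

end
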